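(* Let $p$ be prime, let $c_1,\dots,c_k$ be positive integers, and let $v\ge2$ be an integer coprime to $p$. Given any interval $\tilde J\subset[0,1]$ and any $\varepsilon>0$, there exists a $v$-adic interval $I\subset\tilde J$ such that for every $i\in\{1,\dots,k\}$, letting $J^i$ be the smallest $pc_i$-adic interval containing $I$, there is a point $\zeta(J^i)$ which is an interior endpoint of one of the $pc_i$-adic children of $J^i$ (i.e. an endpoint of a child lying in the interior of $J^i$) satisfying $$0<\zeta(J^i)-Z(I)\le\varepsilon|I|.$$
   Context: For a positive integer $N$, the $N$-adic intervals are $[\frac{k-1}{N^s},\frac{k}{N^s})$, $s,k\in\mathbb{Z}$, with $N$-adic children the $N$ equal-length subintervals $[\frac{k-1}{N^s}+\frac{j-1}{N^{s+1}},\frac{k-1}{N^s}+\frac{j}{N^{s+1}})$, $1\le j\le N$. For a $v$-adic interval $I=[\frac{k-1}{v^s},\frac{k}{v^s})$, $Z(I)=\frac{k-1}{v^s}+\frac{v-1}{v^{s+1}}$ is the left endpoint of its last $v$-adic child. $|I|$ is the length of $I$. *)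

theory Defs
  imports "HOL-Analysis.Analysis"
begin

definition nadic_left :: "nat \<Rightarrow> int \<Rightarrow> int \<Rightarrow> real" where
  "nadic_left N s k = of_int (k - 1) / (real N powi s)"

definition nadic_right :: "nat \<Rightarrow> int \<Rightarrow> int \<Rightarrow> real" where
  "nadic_right N s k = of_int k / (real N powi s)"

definition nadic_interval :: "nat \<Rightarrow> int \<Rightarrow> int \<Rightarrow> real set" where
  "nadic_interval N s k = {nadic_left N s k ..< nadic_right N s k}"

definition is_nadic :: "nat \<Rightarrow> real set \<Rightarrow> bool" where
  "is_nadic N I \<longleftrightarrow> (\<exists>s k. I = nadic_interval N s k)"

text \<open>The j-th N-adic child (1 <= j <= N) of nadic_interval N s k is
  [(k-1)/N^s + (j-1)/N^(s+1), (k-1)/N^s + j/N^(s+1)) = nadic_interval N (s+1) ((k-1)*N + j).\<close>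
definition nadic_child :: "nat \<Rightarrow> int \<Rightarrow> int \<Rightarrow> int \<Rightarrow> real set" where
  "nadic_child N s k j = nadic_interval N (s + 1) ((k - 1) * int N + j)"

definition interior_child_endpoint :: "nat \<Rightarrow> int \<Rightarrow> int \<Rightarrow> real \<Rightarrow> bool" where
  "interior_child_endpoint N s k \<zeta> \<longleftrightarrow>
     (\<exists>j\<in>{1..int N}.
        (\<zeta> = nadic_left N (s + 1) ((k - 1) * int N + j) \<or>
         \<zeta> = nadic_right N (s + 1) ((k - 1) * int N + j))) \<and>
     \<zeta> \<in> interior (nadic_interval N s k)"

text \<open>Z(I): left endpoint of the last v-adic child of nadic_interval v s k.\<close>
definition Zpt :: "nat \<Rightarrow> int \<Rightarrow> int \<Rightarrow> real" where
  "Zpt v s k = of_int (k - 1) / (real v powi s) + (real v - 1) / (real v powi (s + 1))"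

end

theory Submission
  imports Defs "HOL-Number_Theory.Residues"
begin

text \<open>
  Take a v-adic interval inside the given interval and a p-adic rational x = u / p^L just to the
  right of its point Z. Since v is a unit modulo p^L, some power v^K with K arbitrarily large is
  congruent to 1 modulo p^L, so the fractional parts of v^s x and v^(s+K) x agree: x keeps the
  same relative position, just after Z, inside its v-adic interval I of level s + K, and I can be
  made shorter than (p c_i)^(-L). Now x is a (p c_i)-adic rational; if l is least with
  (p c_i)^l x integral, the (p c_i)-adic interval of level l - 1 containing x is the smallest one
  containing I, and x is the left endpoint of one of its children and lies in its interior.
  So \<zeta> = x works for every i simultaneously.
\<close>

lemma mem_nadic_interval_iff:
  assumes "N > 0"
  shows "x \<in> nadic_interval N s t \<longleftrightarrow>
           of_int (t - 1) \<le> real N powi s * x \<and> real N powi s * x < of_int t"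
  using assms by (auto simp: nadic_interval_def nadic_left_def nadic_right_def
      pos_divide_le_eq pos_less_divide_eq mult.commute)

lemma mem_nadic_interval_iff_floor:
  assumes "N > 0"
  shows "x \<in> nadic_interval N s t \<longleftrightarrow> t = \<lfloor>real N powi s * x\<rfloor> + 1"
  using assms by (auto simp: mem_nadic_interval_iff) linarith+

lemma measure_nadic_interval:
  assumes "N > 0"
  shows "measure lborel (nadic_interval N s t) = 1 / real N powi s"
  using assms by (simp add: nadic_interval_def nadic_left_def nadic_right_def
      divide_right_mono diff_divide_distrib)

lemma Zpt_eq:
  assumes "v > 0"
  shows "Zpt v s t = (of_int t - 1 / real v) / real v powi s"
proof -
  have "real v powi (s + 1) = real v powi s * real v"
    using assms by (simp add: power_int_add_1)
  then show ?thesis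
    using assms by (simp add: Zpt_def field_simps)
qed

lemma nadic_left_less_Zpt:
  assumes "v \<ge> 2"
  shows "nadic_left v s t < Zpt v s t"
  using assms by (simp add: Zpt_def nadic_left_def)

lemma Zpt_offset:
  assumes "v > 0" "x \<in> nadic_interval v s t"
  shows "x - Zpt v s t = (frac (real v powi s * x) - (1 - 1 / real v)) / real v powi s"
  using assms by (simp add: mem_nadic_interval_iff_floor Zpt_eq frac_def field_simps)

lemma nadic_interval_nested:
  assumes N: "N > 0" and "s \<le> s'"
    and x': "x \<in> nadic_interval N s' t'" and x: "x \<in> nadic_interval N s t"
  shows "nadic_interval N s' t' \<subseteq> nadic_interval N s t"
proof
  define D where "D = real N powi s"
  define d where "d = nat (s' - s)"
  have Nd: "real N ^ d > 0" using N by simp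
  have scale: "real N powi s' = D * real N ^ d"
    using N \<open>s \<le> s'\<close> by (simp add: D_def d_def flip: power_int_of_nat power_int_add)
  have "of_int ((t - 1) * int N ^ d) \<le> real N powi s' * x"
    "real N powi s' * x < of_int (t * int N ^ d)"
    using x N Nd by (auto simp: mem_nadic_interval_iff scale simp flip: D_def)
  moreover have "of_int (t' - 1) \<le> real N powi s' * x" "real N powi s' * x < of_int t'"
    using x' N by (auto simp: mem_nadic_interval_iff)
  ultimately have lo: "(t - 1) * int N ^ d \<le> t' - 1" and hi: "t' \<le> t * int N ^ d"
    by linarith+
  fix y assume "y \<in> nadic_interval N s' t'"
  then have "of_int (t' - 1) \<le> (D * y) * real N ^ d" "(D * y) * real N ^ d < of_int t'"
    using N by (auto simp: mem_nadic_interval_iff scale ac_simps)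
  moreover have "real_of_int ((t - 1) * int N ^ d) \<le> of_int (t' - 1)"
    "real_of_int t' \<le> of_int (t * int N ^ d)"
    using lo hi by (simp_all only: of_int_le_iff)
  ultimately have "of_int (t - 1) * real N ^ d \<le> (D * y) * real N ^ d"
    "(D * y) * real N ^ d < of_int t * real N ^ d"
    by simp_all
  then show "y \<in> nadic_interval N s t"
    using N Nd by (simp add: mem_nadic_interval_iff D_def)
qed

lemma nadic_grid_point_not_inside:
  assumes "N > 0" "real N powi s * x \<in> \<int>"
  shows "\<not> (nadic_left N s t < x \<and> x < nadic_right N s t)"
proof
  assume x: "nadic_left N s t < x \<and> x < nadic_right N s t"
  obtain z where z: "real N powi s * x = of_int z"
    using assms(2) by (auto elim: Ints_cases)
  have "of_int (t - 1) < real N powi s * x" "real N powi s * x < of_int t"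
    using x assms(1) by (auto simp: nadic_left_def nadic_right_def
        pos_divide_less_eq pos_less_divide_eq mult.commute)
  then show False
    unfolding z by simp
qed

lemma grid_point_child_index:
  assumes "N > 0" "real N ^ Suc m * x = of_int q" "real N ^ m * x \<notin> \<int>"
  shows "int N * \<lfloor>real N ^ m * x\<rfloor> < q" "q < int N * \<lfloor>real N ^ m * x\<rfloor> + int N"
proof -
  define f where "f = \<lfloor>real N ^ m * x\<rfloor>"
  have "of_int f < real N ^ m * x" "real N ^ m * x < of_int f + 1"
    using assms(3) unfolding f_def by (metis Ints_of_int floor_correct order_le_less, linarith)
  moreover have "of_int q = real N * (real N ^ m * x)"
    using assms(2) by simp
  ultimately have "real N * of_int f < of_int q" "of_int q < real N * (of_int f + 1)"
    using assms(1) by simp_all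
  then have "real_of_int (int N * f) < of_int q" "real_of_int q < of_int (int N * f + int N)"
    by (simp_all add: distrib_left)
  then show "int N * f < q" "q < int N * f + int N"
    by (simp_all only: of_int_less_iff)
qed

lemma interior_child_endpoint_grid_point:
  assumes N: "N > 0" and "real N ^ Suc m * x \<in> \<int>" and "real N ^ m * x \<notin> \<int>"
  shows "interior_child_endpoint N (int m) (\<lfloor>real N ^ m * x\<rfloor> + 1) x"
proof -
  define f where "f = \<lfloor>real N ^ m * x\<rfloor>"
  obtain q where q: "real N ^ Suc m * x = of_int q"
    using assms(2) by (auto elim: Ints_cases)
  note j = grid_point_child_index[OF N q assms(3), folded f_def]
  have "real N powi (int m + 1) = real N ^ Suc m"
    by (metis add.commute of_nat_Suc power_int_of_nat)
  then have x: "x = nadic_left N (int m + 1) (f * int N + (q - int N * f + 1))"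
    using q N by (simp add: nadic_left_def field_simps)
  have "x \<in> nadic_interval N (int m) (f + 1)"
    using N by (simp add: mem_nadic_interval_iff_floor f_def)
  moreover have "x \<noteq> nadic_left N (int m) (f + 1)"
  proof
    assume "x = nadic_left N (int m) (f + 1)"
    then have "real N ^ m * x = of_int f"
      using N by (simp add: nadic_left_def)
    then show False
      using assms(3) by simp
  qed
  ultimately have "x \<in> interior (nadic_interval N (int m) (f + 1))"
    by (auto simp: nadic_interval_def)
  moreover have "q - int N * f + 1 \<in> {1..int N}"
    using j by simp
  ultimately show ?thesis
    unfolding interior_child_endpoint_def f_def[symmetric]
    using x by (auto intro!: bexI[of _ "q - int N * f + 1"])
qed

lemma grid_point_neighbourhood_subset:
  assumes N: "N > 0" and "real N ^ Suc m * x \<in> \<int>" and "real N ^ m * x \<notin> \<int>"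
    and "a < x" "x < b" "b - a \<le> 1 / real N ^ Suc m"
  shows "{a..<b} \<subseteq> nadic_interval N (int m) (\<lfloor>real N ^ m * x\<rfloor> + 1)"
proof
  define f where "f = \<lfloor>real N ^ m * x\<rfloor>"
  obtain q where q: "real N ^ Suc m * x = of_int q"
    using assms(2) by (auto elim: Ints_cases)
  note j = grid_point_child_index[OF N q assms(3), folded f_def]
  fix y assume y: "y \<in> {a..<b}"
  have h: "real N ^ Suc m > 0" using N by simp
  have "\<bar>y - x\<bar> < b - a"
    using y assms(4,5) by auto
  then have "\<bar>y - x\<bar> * real N ^ Suc m < (b - a) * real N ^ Suc m"
    using h by (rule mult_strict_right_mono)
  also have "\<dots> \<le> 1"
    using assms(6) h by (simp add: pos_le_divide_eq)
  finally have "\<bar>y - x\<bar> * real N ^ Suc m < 1" .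
  moreover have "real N ^ Suc m * y - of_int q = (y - x) * real N ^ Suc m"
    unfolding q[symmetric] by (simp add: algebra_simps)
  ultimately have "\<bar>real N ^ Suc m * y - of_int q\<bar> < 1"
    using h by (simp add: abs_mult)
  then have "of_int q - 1 < real N ^ Suc m * y" "real N ^ Suc m * y < of_int q + 1"
    by (simp_all add: abs_less_iff)
  moreover have "int N * f \<le> q - 1" "q + 1 \<le> int N * f + int N"
    using j by linarith+
  then have "real_of_int (int N * f) \<le> of_int (q - 1)"
    "real_of_int (q + 1) \<le> of_int (int N * f + int N)"
    by (simp_all only: of_int_le_iff)
  then have "real N * of_int f \<le> of_int q - 1" "of_int q + 1 \<le> real N * (of_int f + 1)"
    by (simp_all add: distrib_left)
  ultimately have "real N * of_int f < real N * (real N ^ m * y)"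
    "real N * (real N ^ m * y) < real N * (of_int f + 1)"
    by simp_all
  then show "y \<in> nadic_interval N (int m) (f + 1)"
    using N by (simp add: mem_nadic_interval_iff)
qed

lemma grid_point_least_nadic_interval:
  assumes N: "N > 0" and "real N ^ Suc m * x \<in> \<int>" and "real N ^ m * x \<notin> \<int>"
    and x: "nadic_left N s t < x" "x < nadic_right N s t"
  shows "nadic_interval N (int m) (\<lfloor>real N ^ m * x\<rfloor> + 1) \<subseteq> nadic_interval N s t"
proof (cases "s \<le> int m")
  case True
  have "x \<in> nadic_interval N (int m) (\<lfloor>real N ^ m * x\<rfloor> + 1)"
    using N by (simp add: mem_nadic_interval_iff_floor)
  moreover have "x \<in> nadic_interval N s t"
    using x by (simp add: nadic_interval_def)
  ultimately show ?thesis
    using nadic_interval_nested[OF N True] by blast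
next
  case False
  then have "s = int (nat (s - int (Suc m)) + Suc m)"
    by simp
  then have "real N powi s = real N ^ nat (s - int (Suc m)) * real N ^ Suc m"
    by (metis power_add power_int_of_nat)
  then have "real N powi s * x \<in> \<int>"
    using assms(2) by (simp add: mult.assoc)
  then show ?thesis
    using nadic_grid_point_not_inside[OF N] x by blast
qed

lemma least_nadic_interval_around_grid_point:
  assumes N: "N > 0" and "x \<notin> \<int>" and "real N ^ L * x \<in> \<int>"
    and x: "a < x" "x < b" and ab: "b - a \<le> 1 / real N ^ L"
  shows "\<exists>s t. {a..<b} \<subseteq> nadic_interval N s t \<and>
           (\<forall>s' t'. {a..<b} \<subseteq> nadic_interval N s' t' \<longrightarrow>
              nadic_interval N s t \<subseteq> nadic_interval N s' t') \<and>
           interior_child_endpoint N s t x"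
proof -
  obtain m where "m < L" and m: "real N ^ m * x \<notin> \<int>" "real N ^ Suc m * x \<in> \<int>"
    using ex_least_nat_less[of "\<lambda>l. real N ^ l * x \<in> \<int>" L] assms(2,3) by auto
  have "real N ^ Suc m \<le> real N ^ L"
    using N \<open>m < L\<close> by (intro power_increasing) auto
  then have "1 / real N ^ L \<le> 1 / real N ^ Suc m"
    using N by (intro divide_left_mono) auto
  then have "{a..<b} \<subseteq> nadic_interval N (int m) (\<lfloor>real N ^ m * x\<rfloor> + 1)"
    using grid_point_neighbourhood_subset[OF N m(2,1) x] ab by simp
  moreover have "nadic_interval N (int m) (\<lfloor>real N ^ m * x\<rfloor> + 1) \<subseteq> nadic_interval N s' t'"
    if "{a..<b} \<subseteq> nadic_interval N s' t'" for s' t'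
  proof -
    have "a \<in> nadic_interval N s' t'" "x \<in> nadic_interval N s' t'"
      using that x by auto
    then show ?thesis
      using grid_point_least_nadic_interval[OF N m(2,1)] x by (auto simp: nadic_interval_def)
  qed
  ultimately show ?thesis
    using interior_child_endpoint_grid_point[OF N m(2,1)] by blast
qed

lemma exists_pow_cong_1_ge:
  fixes v q n :: nat
  assumes "coprime v q" "q > 0"
  obtains K where "n \<le> K" "[v ^ K = 1] (mod q)"
proof
  show "n \<le> totient q * n"
    using assms(2) by (simp add: Suc_leI totient_gt_0_iff)
  have "[(v ^ totient q) ^ n = 1 ^ n] (mod q)"
    by (rule cong_pow[OF euler_theorem[OF assms(1)]])
  then show "[v ^ (totient q * n) = 1] (mod q)"
    by (simp add: power_mult)
qed

lemma frac_mult_cong_1: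
  fixes a q :: nat
  assumes "[a = 1] (mod q)" "real q * y \<in> \<int>"
  shows "frac (real a * y) = frac y"
proof -
  have "int q dvd int a - 1"
    using assms(1) by (simp add: cong_iff_dvd_diff flip: cong_int_iff)
  then obtain d where d: "int a - 1 = int q * d"
    by blast
  obtain z where z: "real q * y = of_int z"
    using assms(2) by (auto elim: Ints_cases)
  have "real a = 1 + real q * of_int d"
    using arg_cong[OF d, of real_of_int] by simp
  then have "real a * y = y + of_int (d * z)"
    using z by (simp add: algebra_simps)
  then show ?thesis
    by (simp only: frac_add_of_int_right)
qed

lemma exists_nadic_interval_within:
  assumes N: "N \<ge> 2" and "\<alpha> < \<beta>"
  obtains s :: nat and n where "nadic_interval N (int s) n \<subseteq> {\<alpha>..\<beta>}"
proof -
  obtain s where s: "2 / (\<beta> - \<alpha>) < real N ^ s"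
    using real_arch_pow[of "real N" "2 / (\<beta> - \<alpha>)"] N by auto
  define M where "M = real N ^ s"
  define n where "n = \<lceil>\<alpha> * M\<rceil> + 1"
  have M: "M > 0" "2 < M * (\<beta> - \<alpha>)"
    using N s \<open>\<alpha> < \<beta>\<close> by (simp_all add: M_def pos_divide_less_eq mult.commute)
  have "\<alpha> * M \<le> of_int (n - 1)" "of_int n < \<alpha> * M + 2"
    unfolding n_def by linarith+
  then have "\<alpha> \<le> nadic_left N (int s) n" "nadic_right N (int s) n \<le> \<beta>"
    using M by (simp_all add: nadic_left_def nadic_right_def flip: M_def)
      (simp_all add: pos_le_divide_eq pos_divide_le_eq algebra_simps)
  then show ?thesis
    using that[of s n] by (force simp: nadic_interval_def)
qed

lemma exists_fraction_between:
  fixes P h a :: real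
  assumes "P > 0" "1 / P < h"
  obtains u :: int where "a < of_int u / P" "of_int u / P < a + h"
proof
  define u where "u = \<lfloor>a * P\<rfloor> + 1"
  have "a * P < of_int u" "of_int u \<le> a * P + 1"
    unfolding u_def by linarith+
  then show "a < of_int u / P"
    using assms(1) by (simp add: pos_less_divide_eq)
  have "of_int u / P \<le> (a * P + 1) / P"
    using \<open>of_int u \<le> a * P + 1\<close> assms(1) by (simp add: divide_right_mono)
  also have "\<dots> = a + 1 / P"
    using assms(1) by (simp add: field_simps)
  finally show "of_int u / P < a + h"
    using assms(2) by linarith
qed

lemma exists_padic_point_after_Zpt:
  fixes v p s :: nat
  assumes v: "v \<ge> 2" and p: "p \<ge> 2" and e: "0 < e" "e \<le> 1 / real v"
  obtains L and x :: real where "real p ^ L * x \<in> \<int>" "x \<in> nadic_interval v (int s) n"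
    "0 < x - Zpt v (int s) n" "x - Zpt v (int s) n < e / real v ^ s"
proof -
  define M where "M = real v ^ s"
  have M: "M > 0"
    using v by (simp add: M_def)
  obtain L where "M / e < real p ^ L"
    using real_arch_pow[of "real p" "M / e"] p by auto
  then have "1 / real p ^ L < e / M"
    using M e(1) p by (simp add: field_simps)
  then obtain u where u: "Zpt v (int s) n < of_int u / real p ^ L"
    "of_int u / real p ^ L < Zpt v (int s) n + e / M"
    using exists_fraction_between[of "real p ^ L" "e / M"] p by auto
  have "(of_int n - 1 / real v + e) / M \<le> of_int n / M"
    using e(2) M by (intro divide_right_mono) auto
  then have "Zpt v (int s) n + e / M \<le> nadic_right v (int s) n"
    using v by (simp add: Zpt_eq nadic_right_def add_divide_distrib flip: M_def)
  then have "of_int u / real p ^ L \<in> nadic_interval v (int s) n"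
    using u nadic_left_less_Zpt[OF v, of "int s" n] by (auto simp: nadic_interval_def)
  moreover have "real p ^ L * (of_int u / real p ^ L) = of_int u"
    using p by simp
  ultimately show ?thesis
    using u by (intro that[of L "of_int u / real p ^ L"]) (simp_all add: M_def)
qed

lemma Zpt_offset_periodic:
  fixes v q K s :: nat
  assumes "v > 0" "[v ^ K = 1] (mod q)" "real q * x \<in> \<int>"
    and "x \<in> nadic_interval v (int s) t" "x \<in> nadic_interval v (int (s + K)) t'"
  shows "(x - Zpt v (int (s + K)) t') * real v ^ (s + K) = (x - Zpt v (int s) t) * real v ^ s"
proof -
  have "real q * (real v ^ s * x) \<in> \<int>"
    using assms(3) by (metis Ints_mult Ints_of_nat mult.left_commute of_nat_power)
  then have "frac (real (v ^ K) * (real v ^ s * x)) = frac (real v ^ s * x)"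
    by (rule frac_mult_cong_1[OF assms(2)])
  then have "frac (real v ^ (s + K) * x) = frac (real v ^ s * x)"
    by (simp add: power_add ac_simps)
  then show ?thesis
    using Zpt_offset[OF assms(1,4)] Zpt_offset[OF assms(1,5), unfolded power_int_of_nat] assms(1)
    by simp
qed

lemma Zpt_less_imp_not_Ints:
  assumes v: "v \<ge> 2" and x: "x \<in> nadic_interval v (int s) t" and "Zpt v (int s) t < x"
  shows "x \<notin> \<int>"
proof
  assume "x \<in> \<int>"
  then have frac0: "frac (real v powi int s * x) = 0"
    by (simp add: Ints_mult)
  have v0: "v > 0"
    using v by simp
  have "x - Zpt v (int s) t = (1 / real v - 1) / real v ^ s"
    unfolding Zpt_offset[OF v0 x] frac0 by simp
  moreover have "(1 / real v - 1) / real v ^ s < 0"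
    using v by (intro divide_neg_pos) auto
  ultimately show False
    using \<open>Zpt v (int s) t < x\<close> by linarith
qed

lemma least_nadic_interval_containing_vadic_interval:
  assumes N: "N > 0" and v: "v \<ge> 2" and "real N ^ L * x \<in> \<int>"
    and "N ^ L \<le> v ^ s" and x: "x \<in> nadic_interval v (int s) t" "Zpt v (int s) t < x"
  shows "\<exists>s' t'. nadic_interval v (int s) t \<subseteq> nadic_interval N s' t' \<and>
           (\<forall>s'' t''. nadic_interval v (int s) t \<subseteq> nadic_interval N s'' t'' \<longrightarrow>
              nadic_interval N s' t' \<subseteq> nadic_interval N s'' t'') \<and>
           interior_child_endpoint N s' t' x"
proof -
  have "real N ^ L \<le> real v ^ s"
    using \<open>N ^ L \<le> v ^ s\<close> by (metis of_nat_le_iff of_nat_power)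
  then have "1 / real v ^ s \<le> 1 / real N ^ L"
    using N v by (intro divide_left_mono) simp_all
  moreover have "nadic_right v (int s) t - nadic_left v (int s) t = 1 / real v ^ s"
    by (simp add: nadic_left_def nadic_right_def diff_divide_distrib)
  moreover have "nadic_left v (int s) t < x" "x < nadic_right v (int s) t"
    using nadic_left_less_Zpt[OF v, of "int s" t] x by (auto simp: nadic_interval_def)
  ultimately show ?thesis
    using least_nadic_interval_around_grid_point[OF N Zpt_less_imp_not_Ints[OF v x] assms(3), of "nadic_left v (int s) t"
        "nadic_right v (int s) t"]
    unfolding nadic_interval_def[of v "int s" t] by simp
qed

lemma exists_vadic_interval_with_padic_point_after_Zpt:
  fixes v p :: nat and Ns :: "nat set"
  assumes v: "v \<ge> 2" and p: "p \<ge> 2" and "coprime v p" and "finite Ns"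
    and "\<alpha> < \<beta>" and "\<epsilon> > 0"
  obtains L s t and x :: real where
    "nadic_interval v (int s) t \<subseteq> {\<alpha>..\<beta>}" "\<forall>N\<in>Ns. N ^ L \<le> v ^ s"
    "real p ^ L * x \<in> \<int>" "x \<in> nadic_interval v (int s) t" "0 < x - Zpt v (int s) t"
    "x - Zpt v (int s) t \<le> \<epsilon> * measure lborel (nadic_interval v (int s) t)"
proof -
  obtain s1 n where I1: "nadic_interval v (int s1) n \<subseteq> {\<alpha>..\<beta>}"
    using exists_nadic_interval_within[OF v \<open>\<alpha> < \<beta>\<close>] .
  define e where "e = min \<epsilon> (1 / real v)"
  have e: "0 < e" "e \<le> 1 / real v" "e \<le> \<epsilon>"
    using v \<open>\<epsilon> > 0\<close> by (auto simp: e_def)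
  obtain L x where x: "real p ^ L * x \<in> \<int>" "x \<in> nadic_interval v (int s1) n"
    "0 < x - Zpt v (int s1) n" "x - Zpt v (int s1) n < e / real v ^ s1"
    using exists_padic_point_after_Zpt[OF v p e(1,2)] .
  obtain K where K: "(\<Sum>Ns) ^ L \<le> K" "[v ^ K = 1] (mod p ^ L)"
    using exists_pow_cong_1_ge[of v "p ^ L" "(\<Sum>Ns) ^ L"] assms(3) p by auto
  define s where "s = s1 + K"
  define t where "t = \<lfloor>real v powi int s * x\<rfloor> + 1"
  have V: "real v ^ s > 0"
    using v by simp
  have xI: "x \<in> nadic_interval v (int s) t"
    using v by (simp add: mem_nadic_interval_iff_floor t_def)
  have offset: "(x - Zpt v (int s) t) * real v ^ s = (x - Zpt v (int s1) n) * real v ^ s1"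
    using Zpt_offset_periodic[OF _ K(2) _ x(2)] xI v x(1) by (simp add: s_def)
  show ?thesis
  proof (rule that)
    show "nadic_interval v (int s) t \<subseteq> {\<alpha>..\<beta>}"
      using nadic_interval_nested[OF _ _ xI x(2)] I1 v by (simp add: s_def)
    show "\<forall>N\<in>Ns. N ^ L \<le> v ^ s"
    proof
      fix N assume "N \<in> Ns"
      then have "N ^ L \<le> (\<Sum>Ns) ^ L"
        using \<open>finite Ns\<close> by (intro power_mono member_le_sum) auto
      also have "\<dots> < 2 ^ K"
        using K(1) less_exp by (rule le_less_trans)
      also have "\<dots> \<le> v ^ K"
        using v by (rule power_mono) simp
      also have "\<dots> \<le> v ^ s"
        using v by (simp add: s_def power_increasing)
      finally show "N ^ L \<le> v ^ s"
        by simp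
    qed
    have "0 < (x - Zpt v (int s) t) * real v ^ s"
      unfolding offset using x(3) v by simp
    then show "0 < x - Zpt v (int s) t"
      using V by (simp add: zero_less_mult_iff)
    have "(x - Zpt v (int s1) n) * real v ^ s1 < e"
      using x(4) v by (simp add: pos_less_divide_eq)
    then have "x - Zpt v (int s) t < e / real v ^ s"
      unfolding offset[symmetric] using V by (simp add: pos_less_divide_eq)
    moreover have "e / real v ^ s \<le> \<epsilon> / real v ^ s"
      using e(3) V by (simp add: divide_right_mono)
    ultimately show "x - Zpt v (int s) t \<le> \<epsilon> * measure lborel (nadic_interval v (int s) t)"
      using v by (simp add: measure_nadic_interval)
  qed (use x(1) xI in auto)
qed

theorem proposition2p6:
  fixes p v :: nat and c :: "nat \<Rightarrow> nat" and k :: nat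
    and J :: "real set" and \<epsilon> :: real
  assumes "prime p"
    and "\<forall>i\<in>{1..k}. c i > 0"
    and "v \<ge> 2" and "coprime v p"
    and "is_interval J" and "J \<subseteq> {0..1}" and "\<exists>x y. x \<in> J \<and> y \<in> J \<and> x < y"
    and "\<epsilon> > 0"
  shows "\<exists>s t. nadic_interval v s t \<subseteq> J \<and>
           (\<forall>i\<in>{1..k}. \<exists>s' t'.
              nadic_interval v s t \<subseteq> nadic_interval (p * c i) s' t' \<and>
              (\<forall>s'' t''. nadic_interval v s t \<subseteq> nadic_interval (p * c i) s'' t'' \<longrightarrow>
                  nadic_interval (p * c i) s' t' \<subseteq> nadic_interval (p * c i) s'' t'') \<and>
              (\<exists>\<zeta>. interior_child_endpoint (p * c i) s' t' \<zeta> \<and>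
                   0 < \<zeta> - Zpt v s t \<and>
                   \<zeta> - Zpt v s t \<le> \<epsilon> * measure lborel (nadic_interval v s t)))"
proof -
  obtain \<alpha> \<beta> where \<alpha>\<beta>: "\<alpha> \<in> J" "\<beta> \<in> J" "\<alpha> < \<beta>"
    using assms(7) by blast
  have J: "{\<alpha>..\<beta>} \<subseteq> J"
    using mem_is_interval_1_I[OF assms(5) \<alpha>\<beta>(1,2)] by auto
  have p: "p \<ge> 2"
    using assms(1) by (rule prime_ge_2_nat)
  obtain L s t x where I: "nadic_interval v (int s) t \<subseteq> {\<alpha>..\<beta>}"
    "\<forall>N\<in>(\<lambda>i. p * c i) ` {1..k}. N ^ L \<le> v ^ s"
    "real p ^ L * x \<in> \<int>" "x \<in> nadic_interval v (int s) t" "0 < x - Zpt v (int s) t"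
    "x - Zpt v (int s) t \<le> \<epsilon> * measure lborel (nadic_interval v (int s) t)"
    using exists_vadic_interval_with_padic_point_after_Zpt
        [OF assms(3) p assms(4) finite_imageI[OF finite_atLeastAtMost] \<alpha>\<beta>(3) assms(8)] .
  have "\<exists>s' t'. nadic_interval v (int s) t \<subseteq> nadic_interval (p * c i) s' t' \<and>
          (\<forall>s'' t''. nadic_interval v (int s) t \<subseteq> nadic_interval (p * c i) s'' t'' \<longrightarrow>
             nadic_interval (p * c i) s' t' \<subseteq> nadic_interval (p * c i) s'' t'') \<and>
          interior_child_endpoint (p * c i) s' t' x"
    if i: "i \<in> {1..k}" for i
  proof (rule least_nadic_interval_containing_vadic_interval[OF _ assms(3) _ _ I(4)])
    show "Zpt v (int s) t < x"
      using I(5) by simp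
    have "c i > 0"
      using assms(2) i by blast
    then show "p * c i > 0"
      using p by simp
    have "real (p * c i) ^ L * x = real (c i) ^ L * (real p ^ L * x)"
      by (simp add: power_mult_distrib)
    then show "real (p * c i) ^ L * x \<in> \<int>"
      using I(3) by (metis Ints_mult Ints_of_nat of_nat_power)
    show "(p * c i) ^ L \<le> v ^ s"
      using I(2) i by simp
  qed
  then show ?thesis
    using I(1,5,6) J by (intro exI[of _ "int s"] exI[of _ t]) blast
qed

end
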